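(* For a Tychonoff space $X$ the following are equivalent: (i) the strong dual $L(X)_\beta$ of $C_p(X)$ has a bounded resolution; (ii) $L(X)_\beta$ has a fundamental bounded resolution; (iii) $X$ is countable.
   Context: $C_p(X)$ is the space of continuous real-valued functions on $X$ with the pointwise topology. Its topological dual is identified with $L(X)$, the vector space with Hamel basis $X$ (finite linear combinations of point evaluations); $L(X)_\beta$ denotes it with the strong topology $\beta(L(X),C(X))$ of uniform convergence on bounded subsets of $C_p(X)$. Order $\mathbb{N}^{\mathbb{N}}$ pointwise. A bounded resolution of a locally convex space $F$ is a family $\{B_\alpha:\alpha\in\mathbb{N}^{\mathbb{N}}\}$ of bounded sets covering $F$ with $B_\alpha\subseteq B_\beta$ whenever $\alpha\le\beta$; it is fundamental if every bounded subset of $F$ lies in some $B_\alpha$. *)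

theory Defs
  imports "HOL-Analysis.Analysis"
begin

definition tychonoff_space :: "'a topology \<Rightarrow> bool" where
  "tychonoff_space X \<longleftrightarrow> completely_regular_space X \<and> Hausdorff_space X"

definition Cfun :: "'a topology \<Rightarrow> ('a \<Rightarrow> real) set" where
  "Cfun X = {f. continuous_map X euclideanreal f}"

text \<open>Bounded subsets of C_p(X) (pointwise topology): a set is bounded iff every
  defining seminorm f \<mapsto> |f x| (x in X) is bounded on it.\<close>
definition Cp_bounded :: "'a topology \<Rightarrow> ('a \<Rightarrow> real) set \<Rightarrow> bool" where
  "Cp_bounded X A \<longleftrightarrow> A \<subseteq> Cfun X \<and> (\<forall>x\<in>topspace X. \<exists>c. \<forall>f\<in>A. \<bar>f x\<bar> \<le> c)"

text \<open>L(X): the free vector space with Hamel basis X, i.e. finitely supported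
  real coefficient functions on the points of X.\<close>
definition Lsupp :: "('a \<Rightarrow> real) \<Rightarrow> 'a set" where
  "Lsupp \<mu> = {x. \<mu> x \<noteq> 0}"

definition LX :: "'a topology \<Rightarrow> ('a \<Rightarrow> real) set" where
  "LX X = {\<mu>. finite (Lsupp \<mu>) \<and> Lsupp \<mu> \<subseteq> topspace X}"

text \<open>Duality pairing: \<mu> = sum of \<mu>(x) \<delta>_x acts on f as sum of \<mu>(x) f(x).\<close>
definition Lpair :: "('a \<Rightarrow> real) \<Rightarrow> ('a \<Rightarrow> real) \<Rightarrow> real" where
  "Lpair \<mu> f = (\<Sum>x\<in>Lsupp \<mu>. \<mu> x * f x)"

text \<open>Bounded subsets of L(X)_beta: the strong topology is generated by the seminorms
  p_A(\<mu>) = sup over f in A of |<\<mu>,f>|, A bounded in C_p(X); a set is bounded iff each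
  of these seminorms is bounded on it.\<close>
definition Lbeta_bounded :: "'a topology \<Rightarrow> ('a \<Rightarrow> real) set \<Rightarrow> bool" where
  "Lbeta_bounded X B \<longleftrightarrow> B \<subseteq> LX X \<and>
     (\<forall>A. Cp_bounded X A \<longrightarrow> (\<exists>c. \<forall>\<mu>\<in>B. \<forall>f\<in>A. \<bar>Lpair \<mu> f\<bar> \<le> c))"

definition Lbeta_bounded_resolution ::
    "'a topology \<Rightarrow> ((nat \<Rightarrow> nat) \<Rightarrow> ('a \<Rightarrow> real) set) \<Rightarrow> bool" where
  "Lbeta_bounded_resolution X B \<longleftrightarrow>
     (\<forall>\<alpha>. Lbeta_bounded X (B \<alpha>)) \<and>
     (\<Union>\<alpha>. B \<alpha>) = LX X \<and>
     (\<forall>\<alpha> \<beta>. (\<forall>n. \<alpha> n \<le> \<beta> n) \<longrightarrow> B \<alpha> \<subseteq> B \<beta>)"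

definition Lbeta_fundamental_bounded_resolution ::
    "'a topology \<Rightarrow> ((nat \<Rightarrow> nat) \<Rightarrow> ('a \<Rightarrow> real) set) \<Rightarrow> bool" where
  "Lbeta_fundamental_bounded_resolution X B \<longleftrightarrow>
     Lbeta_bounded_resolution X B \<and>
     (\<forall>S. Lbeta_bounded X S \<longrightarrow> (\<exists>\<alpha>. S \<subseteq> B \<alpha>))"

end

theory Submission
  imports Defs
begin

(* Bounded subsets of L(X)_beta are exactly the subsets of the boxes of measures supported in a
  fixed finite set with uniformly bounded coefficients. Indeed, if a bounded set had infinite
  support, bump functions on pairwise disjoint open sets, scaled so that the n-th one pairs to n
  with some element of the set, would form a bounded subset of C_p(X) on which the set is
  unbounded. For countable X, enumerating X gives an N^N-indexed cofinal family of boxes.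
  For uncountable X, the point masses are spread over a bounded resolution; a diagonal argument
  yields one index beta dominating the indices of infinitely many of them, so the bounded set
  B beta would have infinite support. *)

lemma tychonoff_space_separating_function:
  assumes "tychonoff_space X" "closedin X C" "x \<in> topspace X - C"
  obtains g where "continuous_map X euclideanreal g" "g x = 1" "\<And>y. y \<in> C \<Longrightarrow> g y = 0"
proof -
  obtain f :: "'a \<Rightarrow> real" where f: "continuous_map X (top_of_set {0..1}) f" "f x = 0" "f ` C \<subseteq> {1}"
    using assms unfolding tychonoff_space_def completely_regular_space_def by blast
  then have "continuous_map X euclideanreal (\<lambda>y. 1 - f y)"
    by (intro continuous_intros) (simp add: continuous_map_in_subtopology)
  then show ?thesis
    using f by (intro that[of "\<lambda>y. 1 - f y"]) auto
qed

lemma tychonoff_space_closedin_finite: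
  "tychonoff_space X \<Longrightarrow> finite S \<Longrightarrow> S \<subseteq> topspace X \<Longrightarrow> closedin X S"
  using Hausdorff_imp_t1_space t1_space_closedin_finite unfolding tychonoff_space_def by blast

lemma tychonoff_space_bump:
  assumes X: "tychonoff_space X" and V: "openin X V" "z \<in> V"
    and G: "finite G" "G \<subseteq> topspace X" "z \<notin> G"
  obtains g where "continuous_map X euclideanreal g" "g z = 1"
    "\<And>y. y \<in> topspace X \<Longrightarrow> y \<notin> V \<Longrightarrow> g y = 0" "\<And>y. y \<in> G \<Longrightarrow> g y = 0"
proof -
  have "closedin X ((topspace X - V) \<union> G)"
    using V(1) G(1,2) by (intro closedin_Un closedin_diff closedin_topspace
        tychonoff_space_closedin_finite[OF X]) auto
  moreover have "z \<in> topspace X - ((topspace X - V) \<union> G)"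
    using V G(3) openin_subset by fastforce
  ultimately obtain g where "continuous_map X euclideanreal g" "g z = 1"
    "\<And>y. y \<in> (topspace X - V) \<union> G \<Longrightarrow> g y = 0"
    by (rule tychonoff_space_separating_function[OF X]) auto
  then show ?thesis
    using that by blast
qed

lemma tychonoff_space_split_infinite:
  assumes X: "tychonoff_space X" and D: "D \<subseteq> topspace X" and W: "openin X W"
    and inf: "infinite (D \<inter> W)"
  shows "\<exists>z U W'. z \<in> D \<and> openin X U \<and> z \<in> U \<and> openin X W' \<and> U \<inter> W' = {} \<and> U \<union> W' \<subseteq> W
           \<and> infinite (D \<inter> W')"
proof -
  obtain a where a: "a \<in> D \<inter> W"
    using infinite_imp_nonempty[OF inf] by blast
  have "infinite (D \<inter> W - {a})"
    using inf by simp
  then obtain b where b: "b \<in> D \<inter> W - {a}"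
    using infinite_imp_nonempty by blast
  have ab: "a \<in> D \<inter> W" "b \<in> D \<inter> W" "a \<noteq> b"
    using a b by auto
  have "closedin X {b}" "a \<in> topspace X - {b}"
    using ab D by (auto intro: tychonoff_space_closedin_finite[OF X])
  then obtain g where g: "continuous_map X euclideanreal g" "g a = 1" "g b = 0"
    by (rule tychonoff_space_separating_function[OF X]) auto
  define level where "level T = {x \<in> topspace X. g x \<in> T} \<inter> W" for T
  have open_level: "openin X (level T)" if "open T" for T
    unfolding level_def using that
    by (intro openin_Int W openin_continuous_map_preimage[OF g(1)]) auto
  have level_W: "level T \<subseteq> W" for T
    unfolding level_def by blast
  have disj: "level {..<1/3} \<inter> level {1/3<..} = {}" "level {2/3<..} \<inter> level {..<2/3} = {}"
    unfolding level_def by auto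
  have ab_level: "a \<in> level {2/3<..}" "b \<in> level {..<1/3}"
    using ab D g unfolding level_def by auto
  have witness: "\<exists>z U W'. z \<in> D \<and> openin X U \<and> z \<in> U \<and> openin X W' \<and> U \<inter> W' = {}
      \<and> U \<union> W' \<subseteq> W \<and> infinite (D \<inter> W')"
    if "z \<in> D" "openin X U" "z \<in> U" "openin X W'" "U \<inter> W' = {}" "U \<subseteq> W" "W' \<subseteq> W"
      "infinite (D \<inter> W')" for z U W'
    using that by blast
  \<comment> \<open>One of the overlapping sets g > 1/3 and g < 2/3 keeps infinitely many points of D, and
    b resp. a has the neighbourhood g < 1/3 resp. g > 2/3 disjoint from it.\<close>
  have "D \<inter> W \<subseteq> (D \<inter> level {1/3<..}) \<union> (D \<inter> level {..<2/3})"
    using D unfolding level_def by force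
  then consider "infinite (D \<inter> level {1/3<..})" | "infinite (D \<inter> level {..<2/3})"
    using inf finite_subset by blast
  then show ?thesis
  proof cases
    case 1
    show ?thesis
      using ab ab_level(2) disj(1) level_W 1
      by (intro witness[of b "level {..<1/3}" "level {1/3<..}"] open_level) auto
  next
    case 2
    show ?thesis
      using ab ab_level(1) disj(2) level_W 2
      by (intro witness[of a "level {2/3<..}" "level {..<2/3}"] open_level) auto
  qed
qed

lemma tychonoff_space_disjoint_open_sequence:
  assumes X: "tychonoff_space X" and D: "D \<subseteq> topspace X" "infinite D"
  obtains z V where "\<And>n::nat. z n \<in> D" "\<And>n. openin X (V n)" "\<And>n. z n \<in> V n"
    "disjoint_family V"
proof -
  \<comment> \<open>A state (z, U, W) is a point z with open neighbourhood U and an open remainder W, disjoint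
    from U, that still meets D infinitely; each later state lives inside the previous remainder.\<close>
  define good where "good t \<longleftrightarrow> fst t \<in> D \<and> openin X (fst (snd t)) \<and> fst t \<in> fst (snd t)
    \<and> openin X (snd (snd t)) \<and> fst (snd t) \<inter> snd (snd t) = {} \<and> infinite (D \<inter> snd (snd t))"
    for t :: "'a \<times> 'a set \<times> 'a set"
  have split: "\<exists>t'. good t' \<and> fst (snd t') \<union> snd (snd t') \<subseteq> W"
    if W: "openin X W" "infinite (D \<inter> W)" for W
  proof -
    obtain z U W' where "z \<in> D" "openin X U" "z \<in> U" "openin X W'" "U \<inter> W' = {}"
      "U \<union> W' \<subseteq> W" "infinite (D \<inter> W')"
      using tychonoff_space_split_infinite[OF X D(1) W] by blast
    then show ?thesis
      by (intro exI[of _ "(z, U, W')"]) (simp add: good_def)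
  qed
  have "\<exists>t. good t"
    using split[of "topspace X"] D by (auto simp: Int_absorb2)
  moreover have "\<exists>t'. good t' \<and> fst (snd t') \<union> snd (snd t') \<subseteq> snd (snd t)" if "good t" for t
    using that by (intro split) (simp_all add: good_def)
  ultimately obtain t where t: "\<And>n. good (t n)"
    and nested: "\<And>n. fst (snd (t (Suc n))) \<union> snd (snd (t (Suc n))) \<subseteq> snd (snd (t n))"
    using dependent_nat_choice[of "\<lambda>_. good" "\<lambda>_ t t'. fst (snd t') \<union> snd (snd t') \<subseteq> snd (snd t)"]
    by blast
  define V where "V n = fst (snd (t n))" for n
  define W where "W n = snd (snd (t n))" for n
  have "decseq W"
    using nested unfolding W_def by (intro decseq_SucI) blast
  have "V m \<inter> V n = {}" if "m < n" for m n
  proof -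
    have "V n \<subseteq> W (n - 1)"
      using nested[of "n - 1"] that unfolding V_def W_def by simp
    also have "\<dots> \<subseteq> W m"
      using \<open>decseq W\<close> that by (simp add: decseqD)
    finally show ?thesis
      using t[of m] unfolding good_def V_def W_def by blast
  qed
  then have "disjoint_family V"
    unfolding disjoint_family_on_def by (metis Int_commute linorder_neqE_nat)
  moreover have "fst (t n) \<in> D" "openin X (V n)" "fst (t n) \<in> V n" for n
    using t[of n] unfolding good_def V_def by auto
  ultimately show ?thesis
    by (intro that[of "\<lambda>n. fst (t n)" V])
qed

lemma infinite_sets_inj_select:
  assumes "\<And>n. infinite (A n)"
  obtains s :: "nat \<Rightarrow> 'a" where "inj s" "\<And>n. s n \<in> A n"
proof -
  \<comment> \<open>A state (y, C) records the current choice y and the set C of all earlier choices.\<close>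
  obtain y0 where "y0 \<in> A 0"
    using infinite_imp_nonempty[OF assms] by blast
  then have "\<exists>g. \<forall>n. (fst (g n) \<in> A n \<and> fst (g n) \<notin> snd (g n) \<and> finite (snd (g n)))
               \<and> snd (g (Suc n)) = insert (fst (g n)) (snd (g n))"
  proof (intro dependent_nat_choice[where P = "\<lambda>n (y, C). y \<in> A n \<and> y \<notin> C \<and> finite C"
      and Q = "\<lambda>n (y, C) (y', C'). C' = insert y C", simplified split_beta])
    fix n and yC :: "'a \<times> 'a set"
    assume "fst yC \<in> A n \<and> fst yC \<notin> snd yC \<and> finite (snd yC)"
    then have "infinite (A (Suc n) - insert (fst yC) (snd yC))"
      using assms by auto
    then obtain y where "y \<in> A (Suc n) - insert (fst yC) (snd yC)"
      by (metis finite.emptyI ex_in_conv)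
    then show "\<exists>y'. (fst y' \<in> A (Suc n) \<and> fst y' \<notin> snd y' \<and> finite (snd y'))
               \<and> snd y' = insert (fst yC) (snd yC)"
      using \<open>fst yC \<in> A n \<and> fst yC \<notin> snd yC \<and> finite (snd yC)\<close>
      by (intro exI[of _ "(y, insert (fst yC) (snd yC))"]) auto
  qed (intro exI[of _ "(y0, {})"], simp)
  then obtain g where g: "\<And>n. fst (g n) \<in> A n" "\<And>n. fst (g n) \<notin> snd (g n)"
    and chosen: "\<And>n. snd (g (Suc n)) = insert (fst (g n)) (snd (g n))"
    by blast
  have "incseq (\<lambda>n. snd (g n))"
    by (rule incseq_SucI) (simp add: chosen subset_insertI)
  then have "fst (g m) \<in> snd (g n)" if "m < n" for m n
    using chosen[of m] that by (metis Suc_leI incseqD insertI1 subsetD)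
  then have "inj (\<lambda>n. fst (g n))"
    by (metis g(2) linorder_injI)
  then show ?thesis
    using g(1) by (rule that)
qed

lemma uncountable_infinite_dominated:
  fixes f :: "'a \<Rightarrow> nat \<Rightarrow> nat"
  assumes "uncountable T"
  obtains \<beta> where "infinite {y \<in> T. \<forall>i. f y i \<le> \<beta> i}"
proof -
  have split: "\<exists>k. uncountable {x \<in> S. f x n \<le> k}" if "uncountable S" for S n
  proof (rule ccontr)
    assume "\<nexists>k. uncountable {x \<in> S. f x n \<le> k}"
    then have "countable (\<Union>k. {x \<in> S. f x n \<le> k})"
      by (intro countable_UN) auto
    moreover have "(\<Union>k. {x \<in> S. f x n \<le> k}) = S"
      by auto
    ultimately show False
      using that by simp
  qed
  have "\<exists>P. \<forall>n. (uncountable (P n) \<and> P n \<subseteq> T)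
      \<and> (P (Suc n) \<subseteq> P n \<and> (\<exists>k. \<forall>x\<in>P (Suc n). f x n \<le> k))"
  proof (rule dependent_nat_choice[where P = "\<lambda>_ S. uncountable S \<and> S \<subseteq> T"
        and Q = "\<lambda>n S S'. S' \<subseteq> S \<and> (\<exists>k. \<forall>x\<in>S'. f x n \<le> k)"])
    show "\<exists>S. uncountable S \<and> S \<subseteq> T"
      using assms by blast
    fix S n assume S: "uncountable S \<and> S \<subseteq> T"
    then obtain k where k: "uncountable {x \<in> S. f x n \<le> k}"
      using split[of S n] by blast
    have "{x \<in> S. f x n \<le> k} \<subseteq> S" "\<forall>x\<in>{x \<in> S. f x n \<le> k}. f x n \<le> k"
      by auto
    with k S show "\<exists>S'. (uncountable S' \<and> S' \<subseteq> T) \<and> S' \<subseteq> S \<and> (\<exists>k. \<forall>x\<in>S'. f x n \<le> k)"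
      by (intro exI[of _ "{x \<in> S. f x n \<le> k}"] conjI exI[of _ k]) blast+
  qed
  then obtain P where P: "\<forall>n. (uncountable (P n) \<and> P n \<subseteq> T)
      \<and> (P (Suc n) \<subseteq> P n \<and> (\<exists>k. \<forall>x\<in>P (Suc n). f x n \<le> k))" ..
  then have P: "\<And>n. uncountable (P n)" "\<And>n. P n \<subseteq> T" "\<And>n. P (Suc n) \<subseteq> P n"
    and bounded: "\<forall>n. \<exists>k. \<forall>x\<in>P (Suc n). f x n \<le> k"
    by simp_all
  obtain K where K: "\<And>n x. x \<in> P (Suc n) \<Longrightarrow> f x n \<le> K n"
    using choice[OF bounded] by blast
  have "decseq P"
    using P(3) by (rule decseq_SucI)
  have "infinite (P (Suc n))" for n
    using P(1) countable_finite by blast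
  then obtain s where s: "inj s" "\<And>n. s n \<in> P (Suc n)"
    using infinite_sets_inj_select[of "\<lambda>n. P (Suc n)"] by metis
  \<comment> \<open>For i \<le> m, coordinate i of s m is at most K i since s m \<in> P (Suc i); the finitely many
    s m with m < i are covered by the maximum.\<close>
  define \<beta> where "\<beta> i = Max (insert (K i) ((\<lambda>j. f (s j) i) ` {..<i}))" for i
  have "f (s m) i \<le> \<beta> i" for m i
  proof (cases "m < i")
    case True
    then show ?thesis
      unfolding \<beta>_def by (intro Max_ge) auto
  next
    case False
    then have "s m \<in> P (Suc i)"
      using s(2)[of m] decseqD[OF \<open>decseq P\<close>, of "Suc i" "Suc m"] by auto
    then have "f (s m) i \<le> K i"
      by (rule K)
    also have "K i \<le> \<beta> i"
      unfolding \<beta>_def by (intro Max_ge) auto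
    finally show ?thesis .
  qed
  moreover have "s m \<in> T" for m
    using s(2) P(2) by blast
  ultimately have "range s \<subseteq> {y \<in> T. \<forall>i. f y i \<le> \<beta> i}"
    by blast
  then show ?thesis
    using range_inj_infinite[OF s(1)] finite_subset that by blast
qed

lemma countable_finite_exhaustion:
  assumes "countable T"
  obtains E :: "nat \<Rightarrow> 'a set" where "\<And>N. finite (E N)" "\<And>N. E N \<subseteq> T" "mono E"
    "\<And>F. finite F \<Longrightarrow> F \<subseteq> T \<Longrightarrow> \<exists>N. F \<subseteq> E N"
proof
  define E where "E N = {x \<in> T. to_nat_on T x \<le> N}" for N
  show "finite (E N)" for N
  proof (rule finite_imageD)
    show "finite (to_nat_on T ` E N)"
      by (rule finite_subset[of _ "{..N}"]) (auto simp: E_def)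
    show "inj_on (to_nat_on T) (E N)"
      using inj_on_to_nat_on[OF assms] by (rule inj_on_subset) (auto simp: E_def)
  qed
  show "E N \<subseteq> T" for N
    unfolding E_def by blast
  show "mono E"
    unfolding E_def by (intro monoI) auto
  show "\<exists>N. F \<subseteq> E N" if "finite F" "F \<subseteq> T" for F
    using that by (intro exI[of _ "Max (insert 0 (to_nat_on T ` F))"]) (auto simp: E_def)
qed

definition Lbox :: "'a topology \<Rightarrow> 'a set \<Rightarrow> real \<Rightarrow> ('a \<Rightarrow> real) set" where
  "Lbox X F M = {\<mu> \<in> LX X. Lsupp \<mu> \<subseteq> F \<and> (\<forall>x. \<bar>\<mu> x\<bar> \<le> M)}"

lemma Lbox_mono: "F \<subseteq> F' \<Longrightarrow> M \<le> M' \<Longrightarrow> Lbox X F M \<subseteq> Lbox X F' M'"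
  unfolding Lbox_def by (auto intro: order_trans)

lemma LX_in_Lbox_Lsupp:
  assumes "\<mu> \<in> LX X"
  shows "\<mu> \<in> Lbox X (Lsupp \<mu>) (\<Sum>x\<in>Lsupp \<mu>. \<bar>\<mu> x\<bar>)"
proof -
  have "finite (Lsupp \<mu>)"
    using assms unfolding LX_def by blast
  then have "\<bar>\<mu> x\<bar> \<le> (\<Sum>x\<in>Lsupp \<mu>. \<bar>\<mu> x\<bar>)" for x
    by (cases "x \<in> Lsupp \<mu>") (auto intro: member_le_sum sum_nonneg simp: Lsupp_def)
  then show ?thesis
    using assms unfolding Lbox_def by blast
qed

lemma Lbeta_bounded_subset: "Lbeta_bounded X S \<Longrightarrow> S' \<subseteq> S \<Longrightarrow> Lbeta_bounded X S'"
  unfolding Lbeta_bounded_def by blast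

lemma Lpair_eq_point:
  assumes "finite (Lsupp \<mu>)" "\<And>y. y \<in> Lsupp \<mu> \<Longrightarrow> y \<noteq> x \<Longrightarrow> g y = 0"
  shows "Lpair \<mu> g = \<mu> x * g x"
proof (cases "x \<in> Lsupp \<mu>")
  case True
  then show ?thesis
    using assms sum.remove[OF assms(1) True, of "\<lambda>y. \<mu> y * g y"] unfolding Lpair_def by simp
next
  case False
  then have "\<mu> x = 0"
    unfolding Lsupp_def by simp
  moreover have "Lpair \<mu> g = 0"
    unfolding Lpair_def using assms(2) False by (intro sum.neutral) fastforce
  ultimately show ?thesis
    by simp
qed

lemma Lbeta_bounded_Lbox:
  assumes F: "finite F" "F \<subseteq> topspace X"
  shows "Lbeta_bounded X (Lbox X F M)"
  unfolding Lbeta_bounded_def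
proof (intro conjI allI impI)
  show "Lbox X F M \<subseteq> LX X"
    unfolding Lbox_def by blast
next
  fix A assume "Cp_bounded X A"
  then have "\<forall>x\<in>topspace X. \<exists>c. \<forall>f\<in>A. \<bar>f x\<bar> \<le> c"
    unfolding Cp_bounded_def by blast
  then obtain c where c: "\<And>x f. x \<in> topspace X \<Longrightarrow> f \<in> A \<Longrightarrow> \<bar>f x\<bar> \<le> c x"
    by metis
  have "\<bar>Lpair \<mu> f\<bar> \<le> (\<Sum>x\<in>F. \<bar>M\<bar> * \<bar>c x\<bar>)" if \<mu>: "\<mu> \<in> Lbox X F M" and f: "f \<in> A" for \<mu> f
  proof -
    have supp: "Lsupp \<mu> \<subseteq> F" and coeff: "\<And>x. \<bar>\<mu> x\<bar> \<le> \<bar>M\<bar>"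
      using \<mu> unfolding Lbox_def by (auto intro: order_trans[OF _ abs_ge_self])
    have "\<bar>Lpair \<mu> f\<bar> \<le> (\<Sum>x\<in>Lsupp \<mu>. \<bar>\<mu> x\<bar> * \<bar>f x\<bar>)"
      unfolding Lpair_def abs_mult[symmetric] by (rule sum_abs)
    also have "\<dots> \<le> (\<Sum>x\<in>Lsupp \<mu>. \<bar>M\<bar> * \<bar>c x\<bar>)"
    proof (rule sum_mono)
      fix x assume "x \<in> Lsupp \<mu>"
      then have "\<bar>f x\<bar> \<le> \<bar>c x\<bar>"
        using c[OF _ f] supp F by fastforce
      then show "\<bar>\<mu> x\<bar> * \<bar>f x\<bar> \<le> \<bar>M\<bar> * \<bar>c x\<bar>"
        using coeff by (simp add: mult_mono')
    qed
    also have "\<dots> \<le> (\<Sum>x\<in>F. \<bar>M\<bar> * \<bar>c x\<bar>)"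
      using supp F by (intro sum_mono2) auto
    finally show ?thesis .
  qed
  then show "\<exists>b. \<forall>\<mu>\<in>Lbox X F M. \<forall>f\<in>A. \<bar>Lpair \<mu> f\<bar> \<le> b"
    by blast
qed

lemma Cp_bounded_disjoint_supports:
  assumes "\<And>n. continuous_map X euclideanreal (h n)"
    and "\<And>n x. x \<in> topspace X \<Longrightarrow> x \<notin> V n \<Longrightarrow> h n x = 0"
    and "disjoint_family V"
  shows "Cp_bounded X (range h)"
  unfolding Cp_bounded_def
proof (intro conjI ballI)
  show "range h \<subseteq> Cfun X"
    unfolding Cfun_def using assms(1) by blast
next
  fix x assume x: "x \<in> topspace X"
  define k where "k = (SOME k. x \<in> V k)"
  have "\<bar>h n x\<bar> \<le> \<bar>h k x\<bar>" for n
  proof (cases "x \<in> V n")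
    case True
    moreover have "x \<in> V k"
      unfolding k_def using True by (rule someI)
    ultimately have "k = n"
      using assms(3) unfolding disjoint_family_on_def by blast
    then show ?thesis
      by simp
  qed (use assms(2) x in simp)
  then show "\<exists>c. \<forall>f\<in>range h. \<bar>f x\<bar> \<le> c"
    by blast
qed

lemma Lbeta_bounded_Lsupp_finite:
  assumes X: "tychonoff_space X" and S: "Lbeta_bounded X S"
  shows "finite (\<Union>\<mu>\<in>S. Lsupp \<mu>)"
proof (rule ccontr)
  assume infinite: "infinite (\<Union>\<mu>\<in>S. Lsupp \<mu>)"
  have SL: "S \<subseteq> LX X"
    using S unfolding Lbeta_bounded_def by blast
  then have "(\<Union>\<mu>\<in>S. Lsupp \<mu>) \<subseteq> topspace X"
    unfolding LX_def by blast
  then obtain z :: "nat \<Rightarrow> 'a" and V where z: "\<And>n. z n \<in> (\<Union>\<mu>\<in>S. Lsupp \<mu>)"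
    and V: "\<And>n. openin X (V n)" "\<And>n. z n \<in> V n" "disjoint_family V"
    by (rule tychonoff_space_disjoint_open_sequence[OF X _ infinite]) auto
  have "\<forall>n. \<exists>\<nu>. \<nu> \<in> S \<and> z n \<in> Lsupp \<nu>"
    using z by blast
  then obtain \<mu> where \<mu>: "\<And>n. \<mu> n \<in> S" "\<And>n. z n \<in> Lsupp (\<mu> n)"
    by metis
  have fin: "finite (Lsupp (\<mu> n))" and supp: "Lsupp (\<mu> n) \<subseteq> topspace X" for n
    using \<mu>(1)[of n] SL unfolding LX_def by auto
  have "\<exists>g. continuous_map X euclideanreal g \<and> g (z n) = 1
      \<and> (\<forall>y\<in>topspace X. y \<notin> V n \<longrightarrow> g y = 0) \<and> (\<forall>y\<in>Lsupp (\<mu> n) - {z n}. g y = 0)" for n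
  proof -
    obtain g where "continuous_map X euclideanreal g" "g (z n) = 1"
      "\<And>y. y \<in> topspace X \<Longrightarrow> y \<notin> V n \<Longrightarrow> g y = 0" "\<And>y. y \<in> Lsupp (\<mu> n) - {z n} \<Longrightarrow> g y = 0"
      by (rule tychonoff_space_bump[OF X V(1,2), of "Lsupp (\<mu> n) - {z n}"])
        (use fin[of n] supp[of n] in auto)
    then show ?thesis
      by blast
  qed
  then obtain g where g: "\<And>n. continuous_map X euclideanreal (g n)" "\<And>n. g n (z n) = 1"
    "\<And>n y. y \<in> topspace X \<Longrightarrow> y \<notin> V n \<Longrightarrow> g n y = 0"
    "\<And>n y. y \<in> Lsupp (\<mu> n) - {z n} \<Longrightarrow> g n y = 0"
    by metis
  \<comment> \<open>The bump g n pairs with \<mu> n only through the coefficient at z n, so after scaling the pairing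
    is n; disjointness of the V n keeps the scaled bumps pointwise bounded.\<close>
  define h where "h n x = real n / \<bar>\<mu> n (z n)\<bar> * g n x" for n x
  have "Cp_bounded X (range h)"
  proof (rule Cp_bounded_disjoint_supports[OF _ _ V(3)])
    show "continuous_map X euclideanreal (h n)" for n
      unfolding h_def by (intro continuous_intros g(1))
    show "h n x = 0" if "x \<in> topspace X" "x \<notin> V n" for n x
      unfolding h_def using g(3) that by simp
  qed
  then obtain c where c: "\<And>n. \<bar>Lpair (\<mu> n) (h n)\<bar> \<le> c"
    using S \<mu>(1) unfolding Lbeta_bounded_def by blast
  have "\<bar>Lpair (\<mu> n) (h n)\<bar> = real n" for n
  proof -
    have "Lpair (\<mu> n) (h n) = \<mu> n (z n) * h n (z n)"
      using fin[of n] g(4) by (intro Lpair_eq_point) (auto simp: h_def)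
    moreover have "\<mu> n (z n) \<noteq> 0"
      using \<mu>(2) unfolding Lsupp_def by simp
    ultimately show ?thesis
      unfolding h_def using g(2) by (simp add: abs_mult)
  qed
  then have "real n \<le> c" for n
    using c by metis
  then show False
    using reals_Archimedean2 not_less by blast
qed

lemma Lbeta_bounded_coefficients:
  assumes X: "tychonoff_space X" and S: "Lbeta_bounded X S"
  obtains M where "\<And>\<mu> x. \<mu> \<in> S \<Longrightarrow> \<bar>\<mu> x\<bar> \<le> M"
proof -
  define F where "F = (\<Union>\<mu>\<in>S. Lsupp \<mu>)"
  have F: "finite F" "F \<subseteq> topspace X"
    using Lbeta_bounded_Lsupp_finite[OF X S] S unfolding F_def Lbeta_bounded_def LX_def by auto
  have fin: "finite (Lsupp \<mu>)" if "\<mu> \<in> S" for \<mu>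
    using that S unfolding Lbeta_bounded_def LX_def by auto
  have "\<exists>c. \<forall>\<mu>\<in>S. \<bar>\<mu> x\<bar> \<le> c" if x: "x \<in> F" for x
  proof -
    have "closedin X (F - {x})" "x \<in> topspace X - (F - {x})"
      using F x by (auto intro: tychonoff_space_closedin_finite[OF X])
    then obtain g where g: "continuous_map X euclideanreal g" "g x = 1"
      "\<And>y. y \<in> F - {x} \<Longrightarrow> g y = 0"
      by (rule tychonoff_space_separating_function[OF X]) auto
    have "Cp_bounded X {g}"
      using g(1) unfolding Cp_bounded_def Cfun_def by auto
    then obtain c where c: "\<forall>\<mu>\<in>S. \<bar>Lpair \<mu> g\<bar> \<le> c"
      using S unfolding Lbeta_bounded_def by blast
    have "Lpair \<mu> g = \<mu> x" if "\<mu> \<in> S" for \<mu>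
      using that fin[OF that] g(2,3) unfolding F_def by (subst Lpair_eq_point) auto
    then show ?thesis
      using c by auto
  qed
  then obtain c where c: "\<And>x \<mu>. x \<in> F \<Longrightarrow> \<mu> \<in> S \<Longrightarrow> \<bar>\<mu> x\<bar> \<le> c x"
    by metis
  have "\<bar>\<mu> x\<bar> \<le> (\<Sum>y\<in>F. \<bar>c y\<bar>)" if "\<mu> \<in> S" for \<mu> x
  proof (cases "x \<in> F")
    case True
    then have "\<bar>c x\<bar> \<le> (\<Sum>y\<in>F. \<bar>c y\<bar>)"
      using F(1) by (intro member_le_sum) auto
    then show ?thesis
      using c[OF True that] by linarith
  next
    case False
    then have "\<mu> x = 0"
      using that unfolding F_def Lsupp_def by blast
    then show ?thesis
      by (simp add: sum_nonneg)
  qed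
  then show ?thesis
    using that by blast
qed

lemma Lbeta_bounded_iff_subset_Lbox:
  assumes "tychonoff_space X"
  shows "Lbeta_bounded X S \<longleftrightarrow> (\<exists>F M. finite F \<and> F \<subseteq> topspace X \<and> S \<subseteq> Lbox X F M)"
proof
  assume S: "Lbeta_bounded X S"
  obtain M where "\<And>\<mu> x. \<mu> \<in> S \<Longrightarrow> \<bar>\<mu> x\<bar> \<le> M"
    using Lbeta_bounded_coefficients[OF assms S] by blast
  moreover have "finite (\<Union>\<mu>\<in>S. Lsupp \<mu>)"
    using Lbeta_bounded_Lsupp_finite[OF assms S] .
  moreover have "S \<subseteq> LX X"
    using S unfolding Lbeta_bounded_def by blast
  ultimately show "\<exists>F M. finite F \<and> F \<subseteq> topspace X \<and> S \<subseteq> Lbox X F M"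
    unfolding Lbox_def LX_def by (intro exI[of _ "\<Union>\<mu>\<in>S. Lsupp \<mu>"] exI[of _ M]) blast
next
  assume "\<exists>F M. finite F \<and> F \<subseteq> topspace X \<and> S \<subseteq> Lbox X F M"
  then show "Lbeta_bounded X S"
    using Lbeta_bounded_Lbox Lbeta_bounded_subset by blast
qed

lemma Lbeta_fundamental_bounded_resolution_if_countable:
  assumes X: "tychonoff_space X" and "countable (topspace X)"
  shows "\<exists>B. Lbeta_fundamental_bounded_resolution X B"
proof -
  obtain E :: "nat \<Rightarrow> 'a set" where E: "\<And>N. finite (E N)" "\<And>N. E N \<subseteq> topspace X" "mono E"
    and cofinal: "\<And>F. finite F \<Longrightarrow> F \<subseteq> topspace X \<Longrightarrow> \<exists>N. F \<subseteq> E N"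
    using countable_finite_exhaustion[OF assms(2)] by metis
  define B where "B \<alpha> = Lbox X (E (\<alpha> 0)) (real (\<alpha> 1))" for \<alpha> :: "nat \<Rightarrow> nat"
  have bounded: "Lbeta_bounded X (B \<alpha>)" for \<alpha>
    unfolding B_def using E by (intro Lbeta_bounded_Lbox)
  have fundamental: "\<exists>\<alpha>. S \<subseteq> B \<alpha>" if "Lbeta_bounded X S" for S
  proof -
    have "\<exists>F M. finite F \<and> F \<subseteq> topspace X \<and> S \<subseteq> Lbox X F M"
      using that Lbeta_bounded_iff_subset_Lbox[OF X] by simp
    then obtain F M where F: "finite F" "F \<subseteq> topspace X" "S \<subseteq> Lbox X F M"
      by blast
    obtain N where "F \<subseteq> E N"
      using cofinal[OF F(1,2)] by blast
    moreover obtain k where "M \<le> real k"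
      using real_arch_simple by blast
    ultimately have "Lbox X F M \<subseteq> B (\<lambda>i. if i = 0 then N else k)"
      unfolding B_def by (intro Lbox_mono) simp_all
    then show ?thesis
      using F(3) by blast
  qed
  have "(\<Union>\<alpha>. B \<alpha>) = LX X"
  proof
    show "(\<Union>\<alpha>. B \<alpha>) \<subseteq> LX X"
      unfolding B_def Lbox_def by blast
    show "LX X \<subseteq> (\<Union>\<alpha>. B \<alpha>)"
    proof
      fix \<mu> assume \<mu>: "\<mu> \<in> LX X"
      have "finite (Lsupp \<mu>)" "Lsupp \<mu> \<subseteq> topspace X"
        using \<mu> unfolding LX_def by auto
      then have "Lbeta_bounded X (Lbox X (Lsupp \<mu>) (\<Sum>x\<in>Lsupp \<mu>. \<bar>\<mu> x\<bar>))"
        by (rule Lbeta_bounded_Lbox)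
      then have "Lbeta_bounded X {\<mu>}"
        by (rule Lbeta_bounded_subset) (simp add: LX_in_Lbox_Lsupp[OF \<mu>])
      then show "\<mu> \<in> (\<Union>\<alpha>. B \<alpha>)"
        using fundamental by blast
    qed
  qed
  moreover have "B \<alpha> \<subseteq> B \<beta>" if "\<forall>n. \<alpha> n \<le> \<beta> n" for \<alpha> \<beta>
    unfolding B_def using that monoD[OF E(3)] by (intro Lbox_mono) auto
  ultimately have "Lbeta_fundamental_bounded_resolution X B"
    unfolding Lbeta_fundamental_bounded_resolution_def Lbeta_bounded_resolution_def
    using bounded fundamental by simp
  then show ?thesis
    by blast
qed

lemma countable_if_Lbeta_bounded_resolution:
  assumes X: "tychonoff_space X" and B: "Lbeta_bounded_resolution X B"
  shows "countable (topspace X)"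
proof (rule ccontr)
  assume "uncountable (topspace X)"
  have bounded: "\<And>\<alpha>. Lbeta_bounded X (B \<alpha>)" and covering: "(\<Union>\<alpha>. B \<alpha>) = LX X"
    and mono: "\<And>\<alpha> \<beta>. \<forall>n. \<alpha> n \<le> \<beta> n \<Longrightarrow> B \<alpha> \<subseteq> B \<beta>"
    using B unfolding Lbeta_bounded_resolution_def by simp_all
  define \<delta> :: "'a \<Rightarrow> 'a \<Rightarrow> real" where "\<delta> y = (\<lambda>x. if x = y then 1 else 0)" for y
  have Lsupp_\<delta>: "Lsupp (\<delta> y) = {y}" for y
    unfolding Lsupp_def \<delta>_def by auto
  have "\<delta> y \<in> (\<Union>\<alpha>. B \<alpha>)" if "y \<in> topspace X" for y
    unfolding covering LX_def using that by (simp add: Lsupp_\<delta>)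
  then have "\<forall>y\<in>topspace X. \<exists>\<alpha>. \<delta> y \<in> B \<alpha>"
    by blast
  then obtain a where a: "\<And>y. y \<in> topspace X \<Longrightarrow> \<delta> y \<in> B (a y)"
    by metis
  obtain \<beta> where infinite: "infinite {y \<in> topspace X. \<forall>i. a y i \<le> \<beta> i}"
    using uncountable_infinite_dominated[OF \<open>uncountable (topspace X)\<close>] by metis
  have "{y \<in> topspace X. \<forall>i. a y i \<le> \<beta> i} \<subseteq> (\<Union>\<mu>\<in>B \<beta>. Lsupp \<mu>)"
  proof
    fix y assume y: "y \<in> {y \<in> topspace X. \<forall>i. a y i \<le> \<beta> i}"
    then have "\<delta> y \<in> B \<beta>"
      using a[of y] mono[of "a y" \<beta>] by auto
    then show "y \<in> (\<Union>\<mu>\<in>B \<beta>. Lsupp \<mu>)"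
      using Lsupp_\<delta>[of y] by blast
  qed
  moreover have "finite (\<Union>\<mu>\<in>B \<beta>. Lsupp \<mu>)"
    by (rule Lbeta_bounded_Lsupp_finite[OF X bounded])
  ultimately show False
    using infinite finite_subset by blast
qed

theorem proposition3p7:
  fixes X :: "'a topology"
  assumes "tychonoff_space X"
  shows "((\<exists>B. Lbeta_bounded_resolution X B) \<longleftrightarrow>
           (\<exists>B. Lbeta_fundamental_bounded_resolution X B))
       \<and> ((\<exists>B. Lbeta_fundamental_bounded_resolution X B) \<longleftrightarrow>
           countable (topspace X))"
proof -
  have fundamental_imp_resolution:
    "\<exists>B. Lbeta_bounded_resolution X B" if "\<exists>B. Lbeta_fundamental_bounded_resolution X B"
    using that unfolding Lbeta_fundamental_bounded_resolution_def by blast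
  have resolution_imp_countable: "countable (topspace X)" if "\<exists>B. Lbeta_bounded_resolution X B"
    using that countable_if_Lbeta_bounded_resolution[OF assms] by blast
  note countable_imp_fundamental = Lbeta_fundamental_bounded_resolution_if_countable[OF assms]
  show ?thesis
  proof (intro conjI iffI)
    show "\<exists>B. Lbeta_fundamental_bounded_resolution X B" if "\<exists>B. Lbeta_bounded_resolution X B"
      using that by (intro countable_imp_fundamental resolution_imp_countable)
  qed (blast intro: fundamental_imp_resolution resolution_imp_countable countable_imp_fundamental)+
qed

end
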